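(* Let $\mu,\lambda\in\mathbb{R}$ with $\lambda\neq0$ and $\rho=\mu/\lambda>0$. Let $\tilde\sigma\in\mathbb{C}\setminus\{0\}$, $\sigma=\tilde\sigma/\lambda$, and let $\varphi\in\mathbb{B}$ satisfy $H_{\mu,\lambda}\varphi=\tilde\sigma\varphi$ (hence $\varphi(0)=0$). Put $\varphi_0(y)=\varphi(iy)$. Then $u\mapsto e^{-\frac12(u-\rho)^2}\frac{\varphi_0(u)}{u}$ is integrable on $(-\infty,0)$, and for all $y\le0$, $$\varphi_0'(y)=\sigma\,e^{\frac12(y-\rho)^2}\int_{-\infty}^{y}e^{-\frac12(u-\rho)^2}\frac{\varphi_0(u)}{u}\,du .$$
   Context: The Bargmann space is $\mathbb{B}=\{\varphi:\mathbb{C}\to\mathbb{C}\text{ entire};\ \int_{\mathbb{C}}|\varphi(z)|^2e^{-|z|^2}\,dx\,dy<\infty\}$. For real $\mu,\lambda$, $H_{\mu,\lambda}=\mu z\frac{d}{dz}+i\lambda\big(z\frac{d^2}{dz^2}+z^2\frac{d}{dz}\big)$. *)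

theory Defs
  imports "HOL-Complex_Analysis.Complex_Analysis"
begin

definition bargmann :: "(complex \<Rightarrow> complex) \<Rightarrow> bool" where
  "bargmann \<phi> \<longleftrightarrow> \<phi> holomorphic_on UNIV \<and>
     integrable lborel (\<lambda>z::complex. (cmod (\<phi> z))^2 * exp (- ((cmod z)^2)))"

definition H_op :: "real \<Rightarrow> real \<Rightarrow> (complex \<Rightarrow> complex) \<Rightarrow> complex \<Rightarrow> complex" where
  "H_op mu lam \<phi> z =
     of_real mu * z * deriv \<phi> z
     + \<i> * of_real lam * (z * deriv (deriv \<phi>) z + z^2 * deriv \<phi> z)"

end

theory Submission
  imports Defs
begin

text \<open>
  Write f t = \<phi> (\<i> t) and g t = exp (- (t - \<rho>)^2 / 2). On the imaginary axis the
  eigenvalue equation reads f'' - (t - \<rho>) f' = \<sigma> f / t, that is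
  (g f')' = \<sigma> g f / t, and the formula is this identity integrated from -\<infinity> to y.
  It remains to see that g f' vanishes at -\<infinity> and that g f / t is integrable.

  Both follow from the growth bound |\<phi> z| \<le> C exp ((|z| + a)^2 / 2), valid for every a > 0,
  for a Bargmann function and for its derivative. Averaging the Cauchy integral formula
  over the boundaries of squares of half-side s \<in> [h, 2h] around z bounds |\<phi> z| by the
  integral of |\<phi>| over a square, and there |\<phi> \<zeta>| \<le> K (|\<phi> \<zeta>|^2 exp (-|\<zeta>|^2) + 1) with
  K = exp ((|z| + 4h)^2 / 2). With a = \<rho>/2 the Gaussian weight wins:
  exp ((|u| + \<rho>/2)^2 / 2) g u \<le> exp (\<rho> u / 2) for u \<le> 0. Near u = 0 the quotient
  f u / u stays bounded because the eigenvalue equation at 0 forces \<phi> 0 = 0.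
\<close>

lemma borel_measurable_Complex[measurable]:
  assumes [measurable]: "f \<in> borel_measurable M" "g \<in> borel_measurable M"
  shows "(\<lambda>x. Complex (f x) (g x)) \<in> borel_measurable M"
proof -
  have "(\<lambda>x. Complex (f x) (g x)) = (\<lambda>x. of_real (f x) + \<i> * of_real (g x))"
    by (auto simp: complex_eq_iff)
  moreover have "(\<lambda>x. of_real (f x) + \<i> * of_real (g x) :: complex) \<in> borel_measurable M"
    by measurable
  ultimately show ?thesis by simp
qed

lemma lborel_complex_eq_distr_pair:
  "(lborel :: complex measure) = distr (lborel \<Otimes>\<^sub>M lborel) borel (\<lambda>(x, y). Complex x y)"
proof (rule lborel_eqI)
  fix l u :: complex
  assume lu: "\<And>b. b \<in> Basis \<Longrightarrow> l \<bullet> b \<le> u \<bullet> b"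
  have "(\<lambda>(x, y). Complex x y) -` box l u \<inter> space (lborel \<Otimes>\<^sub>M lborel)
      = box (Re l) (Re u) \<times> box (Im l) (Im u)"
    by (auto simp: space_pair_measure in_box_complex_iff)
  then have "emeasure (distr (lborel \<Otimes>\<^sub>M lborel) borel (\<lambda>(x, y). Complex x y)) (box l u)
      = emeasure (lborel \<Otimes>\<^sub>M lborel) (box (Re l) (Re u) \<times> box (Im l) (Im u))"
    by (subst emeasure_distr) auto
  also have "\<dots> = emeasure lborel (box (Re l) (Re u)) * emeasure lborel (box (Im l) (Im u))"
    by (rule lborel.emeasure_pair_measure_Times) auto
  also have "\<dots> = ennreal (\<Prod>b\<in>Basis. (u - l) \<bullet> b)"
    using lu[of 1] lu[of \<i>] by (simp add: Basis_complex_def ennreal_mult)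
  finally show "emeasure (distr (lborel \<Otimes>\<^sub>M lborel) borel (\<lambda>(x, y). Complex x y)) (box l u)
      = (\<Prod>b\<in>Basis. (u - l) \<bullet> b)" .
qed simp

lemma nn_integral_lborel_complex:
  assumes [measurable]: "f \<in> borel_measurable (borel :: complex measure)"
  shows "(\<integral>\<^sup>+z. f z \<partial>lborel) = (\<integral>\<^sup>+x. \<integral>\<^sup>+y. f (Complex x y) \<partial>lborel \<partial>lborel)"
proof -
  have "(\<integral>\<^sup>+z. f z \<partial>lborel) = (\<integral>\<^sup>+p. f (case p of (x, y) \<Rightarrow> Complex x y) \<partial>(lborel \<Otimes>\<^sub>M lborel))"
    by (subst lborel_complex_eq_distr_pair) (subst nn_integral_distr; simp)
  also have "\<dots> = (\<integral>\<^sup>+x. \<integral>\<^sup>+y. f (Complex x y) \<partial>lborel \<partial>lborel)"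
    by (subst lborel.nn_integral_fst[symmetric]) auto
  finally show ?thesis .
qed

lemma has_contour_integral_linepath_same_Im_iff:
  assumes "Im z = c" "Im z' = c" "Re z = a" "Re z' = b" "a < b"
  shows "(f has_contour_integral I) (linepath z z') \<longleftrightarrow>
           ((\<lambda>x. f (Complex x c)) has_integral I) {a..b}"
proof -
  have "(f has_contour_integral I) (linepath z z') \<longleftrightarrow>
          ((\<lambda>x. f (linepath z z' x) * (z' - z)) has_integral I) {0..1}"
    by (subst has_contour_integral_linepath) simp_all
  also have "\<dots> \<longleftrightarrow> ((\<lambda>x. f (Complex (a + (b - a) * x) c) * of_real (b - a)) has_integral I) {0..1}"
    using assms
    by (intro has_integral_cong arg_cong2[of _ _ _ _ "(*)"] arg_cong[of _ _ f])
       (auto simp: linepath_def complex_eq_iff algebra_simps)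
  also have "{0..1} = (\<lambda>x. x / (b - a)) ` {0..b-a}"
    using assms by simp
  also have "((\<lambda>x. f (Complex (a + (b - a) * x) c) * of_real (b - a)) has_integral I) \<dots> \<longleftrightarrow>
             ((\<lambda>x. f (Complex (a + x) c) * of_real (b - a)) has_integral ((b - a) *\<^sub>R I)) {0..b-a}"
    by (subst has_integral_stretch_real_iff) (use assms in simp_all)
  also have "\<dots> \<longleftrightarrow> ((\<lambda>x. of_real (b - a) * f (Complex x c)) has_integral (b - a) *\<^sub>R I) {a..b}"
    by (subst has_integral_shift_real_ivl_iff[where c = "-a"])
       (simp_all add: scaleR_conv_of_real mult_ac)
  also have "\<dots> \<longleftrightarrow> ((\<lambda>x. f (Complex x c)) has_integral I) {a..b}"
    by (subst has_integral_mult_right_iff) (use assms in \<open>auto simp: scaleR_conv_of_real\<close>)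
  finally show ?thesis .
qed

lemma ennreal_norm_has_integral_divide_le:
  fixes f g :: "real \<Rightarrow> complex"
  assumes I: "((\<lambda>y. f y / g y) has_integral I) {a..b}"
    and f: "continuous_on {a..b} f"
    and g: "\<And>y. y \<in> {a..b} \<Longrightarrow> s \<le> norm (g y)" and s: "s > 0"
  shows "ennreal (norm I) \<le> ennreal (1 / s) * (\<integral>\<^sup>+y. ennreal (norm (f y)) * indicator {a..b} y \<partial>lborel)"
proof -
  have nf: "continuous_on {a..b} (\<lambda>y. norm (f y))"
    using f by (rule continuous_on_norm)
  have "norm I = norm (integral {a..b} (\<lambda>y. f y / g y))"
    using I by (simp add: integral_unique)
  also have "\<dots> \<le> integral {a..b} (\<lambda>y. norm (f y) / s)"
  proof (rule integral_norm_bound_integral)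
    show "(\<lambda>y. f y / g y) integrable_on {a..b}"
      using I by blast
    show "(\<lambda>y. norm (f y) / s) integrable_on {a..b}"
      using s f by (intro integrable_continuous_interval continuous_intros nf) auto
    fix y assume "y \<in> {a..b}"
    then have "s \<le> norm (g y)"
      by (rule g)
    then show "norm (f y / g y) \<le> norm (f y) / s"
      using s by (simp add: norm_divide frac_le)
  qed
  also have "\<dots> = (1 / s) * integral {a..b} (\<lambda>y. norm (f y))"
    by (simp add: divide_inverse mult.commute)
  finally have "ennreal (norm I) \<le> ennreal (1 / s) * ennreal (integral {a..b} (\<lambda>y. norm (f y)))"
    using s by (simp add: ennreal_mult[symmetric] ennreal_leI integral_nonneg
                          integrable_continuous_interval[OF nf])
  also have "ennreal (integral {a..b} (\<lambda>y. norm (f y)))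
      = (\<integral>\<^sup>+y. ennreal (norm (f y)) * indicator {a..b} y \<partial>lborel)"
    by (rule nn_integral_has_integral_lebesgue'[symmetric])
       (auto intro: integrable_integral integrable_continuous_interval nf)
  finally show ?thesis .
qed

definition vline_norm_integral :: "(complex \<Rightarrow> complex) \<Rightarrow> real \<Rightarrow> real set \<Rightarrow> ennreal" where
  "vline_norm_integral \<phi> c A = (\<integral>\<^sup>+y. ennreal (norm (\<phi> (Complex c y))) * indicator A y \<partial>lborel)"

definition hline_norm_integral :: "(complex \<Rightarrow> complex) \<Rightarrow> real \<Rightarrow> real set \<Rightarrow> ennreal" where
  "hline_norm_integral \<phi> c A = (\<integral>\<^sup>+x. ennreal (norm (\<phi> (Complex x c))) * indicator A x \<partial>lborel)"

lemma vline_norm_integral_mono: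
  "A \<subseteq> B \<Longrightarrow> vline_norm_integral \<phi> c A \<le> vline_norm_integral \<phi> c B"
  unfolding vline_norm_integral_def
  by (intro nn_integral_mono mult_left_mono) (auto split: split_indicator)

lemma hline_norm_integral_mono:
  "A \<subseteq> B \<Longrightarrow> hline_norm_integral \<phi> c A \<le> hline_norm_integral \<phi> c B"
  unfolding hline_norm_integral_def
  by (intro nn_integral_mono mult_left_mono) (auto split: split_indicator)

lemma norm_contour_integral_vertical_side_le:
  assumes cont: "continuous_on UNIV \<phi>" and s: "s > 0" and c: "\<bar>c - Re z\<bar> = s"
  shows "ennreal (norm (contour_integral (linepath (Complex c (Im z - s)) (Complex c (Im z + s)))
                                         (\<lambda>w. \<phi> w / (w - z))))
         \<le> ennreal (1 / s) * vline_norm_integral \<phi> c {Im z - s..Im z + s}"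
proof -
  let ?g = "\<lambda>w. \<phi> w / (w - z)"
  let ?L = "linepath (Complex c (Im z - s)) (Complex c (Im z + s))"
  have "z \<notin> closed_segment (Complex c (Im z - s)) (Complex c (Im z + s))"
    using c s by (auto simp: closed_segment_same_Re complex_eq_iff)
  then have "?g contour_integrable_on ?L"
    by (intro contour_integrable_continuous_linepath continuous_intros continuous_on_subset[OF cont]) auto
  then have "(?g has_contour_integral contour_integral ?L ?g) ?L"
    by (rule has_contour_integral_integral)
  then have "((\<lambda>y. \<phi> (Complex c y) / (Complex c y - z)) has_integral (-\<i> * contour_integral ?L ?g))
               {Im z - s..Im z + s}"
    using s by (subst (asm) has_contour_integral_linepath_same_Re_iff) auto
  from ennreal_norm_has_integral_divide_le[OF this _ _ s]
  show ?thesis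
    unfolding vline_norm_integral_def
    using abs_Re_le_cmod[of "Complex c _ - z"] c
    by (simp add: norm_mult continuous_on_compose2[OF cont] continuous_intros Complex_eq)
qed

lemma norm_contour_integral_horizontal_side_le:
  assumes cont: "continuous_on UNIV \<phi>" and s: "s > 0" and c: "\<bar>c - Im z\<bar> = s"
  shows "ennreal (norm (contour_integral (linepath (Complex (Re z - s) c) (Complex (Re z + s) c))
                                         (\<lambda>w. \<phi> w / (w - z))))
         \<le> ennreal (1 / s) * hline_norm_integral \<phi> c {Re z - s..Re z + s}"
proof -
  let ?g = "\<lambda>w. \<phi> w / (w - z)"
  let ?L = "linepath (Complex (Re z - s) c) (Complex (Re z + s) c)"
  have "z \<notin> closed_segment (Complex (Re z - s) c) (Complex (Re z + s) c)"
    using c s by (auto simp: closed_segment_same_Im complex_eq_iff)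
  then have "?g contour_integrable_on ?L"
    by (intro contour_integrable_continuous_linepath continuous_intros continuous_on_subset[OF cont]) auto
  then have "(?g has_contour_integral contour_integral ?L ?g) ?L"
    by (rule has_contour_integral_integral)
  then have "((\<lambda>x. \<phi> (Complex x c) / (Complex x c - z)) has_integral contour_integral ?L ?g)
               {Re z - s..Re z + s}"
    using s by (subst (asm) has_contour_integral_linepath_same_Im_iff) auto
  from ennreal_norm_has_integral_divide_le[OF this _ _ s]
  show ?thesis
    unfolding hline_norm_integral_def
    using abs_Im_le_cmod[of "Complex _ c - z"] c
    by (simp add: continuous_on_compose2[OF cont] continuous_intros Complex_eq)
qed

lemma Cauchy_integral_formula_square:
  fixes z :: complex and s :: real
  defines "a1 \<equiv> Complex (Re z - s) (Im z - s)" and "a2 \<equiv> Complex (Re z + s) (Im z - s)"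
    and "a3 \<equiv> Complex (Re z + s) (Im z + s)" and "a4 \<equiv> Complex (Re z - s) (Im z + s)"
  assumes holo: "\<phi> holomorphic_on UNIV" and s: "s > 0"
  shows "2 * pi * \<i> * \<phi> z
           = contour_integral (linepath a1 a2) (\<lambda>w. \<phi> w / (w - z))
           + contour_integral (linepath a2 a3) (\<lambda>w. \<phi> w / (w - z))
           + contour_integral (linepath a3 a4) (\<lambda>w. \<phi> w / (w - z))
           + contour_integral (linepath a4 a1) (\<lambda>w. \<phi> w / (w - z))"
proof -
  let ?g = "\<lambda>w. \<phi> w / (w - z)"
  have cont: "continuous_on UNIV \<phi>"
    using holo holomorphic_on_imp_continuous_on by blast
  have zbox: "z \<in> box a1 a3"
    using s by (auto simp: a1_def a3_def in_box_complex_iff)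
  have zni: "z \<notin> path_image (rectpath a1 a3)"
    using zbox s by (simp add: path_image_rectpath_cbox_minus_box a1_def a3_def)
  have "(?g has_contour_integral (2 * pi * \<i> * winding_number (rectpath a1 a3) z * \<phi> z)) (rectpath a1 a3)"
    by (rule Cauchy_integral_formula_convex_simple[OF convex_UNIV holo]) (use zni in auto)
  moreover have "winding_number (rectpath a1 a3) z = 1"
    by (rule winding_number_rectpath) (use zbox in auto)
  ultimately have "2 * pi * \<i> * \<phi> z = contour_integral (rectpath a1 a3) ?g"
    by (simp add: contour_integral_unique)
  moreover have r: "rectpath a1 a3 = linepath a1 a2 +++ linepath a2 a3 +++ linepath a3 a4 +++ linepath a4 a1"
    by (simp add: rectpath_def Let_def a1_def a2_def a3_def a4_def)
  moreover have "z \<notin> closed_segment a1 a2" "z \<notin> closed_segment a2 a3"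
    "z \<notin> closed_segment a3 a4" "z \<notin> closed_segment a4 a1"
    using zni unfolding r by (auto simp: path_image_join)
  moreover have "?g contour_integrable_on linepath p q" if "z \<notin> closed_segment p q" for p q
    using that by (intro contour_integrable_continuous_linepath continuous_intros
                         continuous_on_subset[OF cont]) auto
  ultimately show ?thesis
    by (simp add: contour_integrable_joinI valid_path_join)
qed

lemma Cauchy_square_estimate:
  assumes holo: "\<phi> holomorphic_on UNIV" and s: "s > 0"
  shows "ennreal (2 * pi * norm (\<phi> z)) \<le> ennreal (1 / s) *
           (vline_norm_integral \<phi> (Re z + s) {Im z - s..Im z + s}
          + vline_norm_integral \<phi> (Re z - s) {Im z - s..Im z + s}
          + hline_norm_integral \<phi> (Im z - s) {Re z - s..Re z + s}
          + hline_norm_integral \<phi> (Im z + s) {Re z - s..Re z + s})"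
proof -
  define a1 where "a1 = Complex (Re z - s) (Im z - s)"
  define a2 where "a2 = Complex (Re z + s) (Im z - s)"
  define a3 where "a3 = Complex (Re z + s) (Im z + s)"
  define a4 where "a4 = Complex (Re z - s) (Im z + s)"
  define I where "I p q = contour_integral (linepath p q) (\<lambda>w. \<phi> w / (w - z))" for p q
  have cont: "continuous_on UNIV \<phi>"
    using holo holomorphic_on_imp_continuous_on by blast
  have "2 * pi * norm (\<phi> z) = norm (2 * pi * \<i> * \<phi> z)"
    by (simp add: norm_mult)
  also have "\<dots> = norm (I a1 a2 + I a2 a3 + I a3 a4 + I a4 a1)"
    unfolding I_def a1_def a2_def a3_def a4_def using Cauchy_integral_formula_square[OF holo s] by simp
  also have "\<dots> \<le> norm (I a1 a2) + norm (I a2 a3) + norm (I a4 a3) + norm (I a1 a4)"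
  proof -
    have "norm (I a3 a4) = norm (I a4 a3)" "norm (I a4 a1) = norm (I a1 a4)"
      unfolding I_def using contour_integral_reversepath[of "linepath a4 a3"]
            contour_integral_reversepath[of "linepath a1 a4"] by simp_all
    then show ?thesis
      by (smt (verit) norm_triangle_ineq)
  qed
  finally have "ennreal (2 * pi * norm (\<phi> z))
      \<le> ennreal (norm (I a1 a2)) + ennreal (norm (I a2 a3)) + ennreal (norm (I a4 a3)) + ennreal (norm (I a1 a4))"
    by (simp add: ennreal_plus[symmetric] ennreal_leI del: ennreal_plus)
  also have "\<dots> \<le> ennreal (1 / s) * hline_norm_integral \<phi> (Im z - s) {Re z - s..Re z + s}
      + ennreal (1 / s) * vline_norm_integral \<phi> (Re z + s) {Im z - s..Im z + s}
      + ennreal (1 / s) * hline_norm_integral \<phi> (Im z + s) {Re z - s..Re z + s}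
      + ennreal (1 / s) * vline_norm_integral \<phi> (Re z - s) {Im z - s..Im z + s}"
    unfolding I_def a1_def a2_def a3_def a4_def using s
    by (intro add_mono norm_contour_integral_horizontal_side_le norm_contour_integral_vertical_side_le cont) auto
  finally show ?thesis
    by (simp add: distrib_left add_ac)
qed

definition box_norm_integral :: "(complex \<Rightarrow> complex) \<Rightarrow> real set \<Rightarrow> real set \<Rightarrow> ennreal" where
  "box_norm_integral \<phi> X Y =
     (\<integral>\<^sup>+x. \<integral>\<^sup>+y. ennreal (norm (\<phi> (Complex x y))) * indicator X x * indicator Y y \<partial>lborel \<partial>lborel)"

lemma box_norm_integral_eq_vline:
  assumes [measurable]: "\<phi> \<in> borel_measurable borel" "X \<in> sets borel" "Y \<in> sets borel"
  shows "box_norm_integral \<phi> X Y = (\<integral>\<^sup>+x. vline_norm_integral \<phi> x Y * indicator X x \<partial>lborel)"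
  unfolding box_norm_integral_def
proof (intro nn_integral_cong)
  fix x
  have "vline_norm_integral \<phi> x Y * indicator X x
      = (\<integral>\<^sup>+y. (ennreal (norm (\<phi> (Complex x y))) * indicator Y y) * indicator X x \<partial>lborel)"
    unfolding vline_norm_integral_def by (rule nn_integral_multc[symmetric]) simp
  then show "(\<integral>\<^sup>+y. ennreal (norm (\<phi> (Complex x y))) * indicator X x * indicator Y y \<partial>lborel)
      = vline_norm_integral \<phi> x Y * indicator X x"
    by (simp add: mult_ac)
qed

lemma box_norm_integral_eq_hline:
  assumes [measurable]: "\<phi> \<in> borel_measurable borel" "X \<in> sets borel" "Y \<in> sets borel"
  shows "box_norm_integral \<phi> X Y = (\<integral>\<^sup>+y. hline_norm_integral \<phi> y X * indicator Y y \<partial>lborel)"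
proof -
  have "box_norm_integral \<phi> X Y
      = (\<integral>\<^sup>+y. \<integral>\<^sup>+x. ennreal (norm (\<phi> (Complex x y))) * indicator X x * indicator Y y \<partial>lborel \<partial>lborel)"
    unfolding box_norm_integral_def by (rule lborel_pair.Fubini'[symmetric]) simp
  also have "\<dots> = (\<integral>\<^sup>+y. hline_norm_integral \<phi> y X * indicator Y y \<partial>lborel)"
  proof (intro nn_integral_cong)
    fix y
    have "hline_norm_integral \<phi> y X * indicator Y y
        = (\<integral>\<^sup>+x. (ennreal (norm (\<phi> (Complex x y))) * indicator X x) * indicator Y y \<partial>lborel)"
      unfolding hline_norm_integral_def by (rule nn_integral_multc[symmetric]) simp
    then show "(\<integral>\<^sup>+x. ennreal (norm (\<phi> (Complex x y))) * indicator X x * indicator Y y \<partial>lborel)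
        = hline_norm_integral \<phi> y X * indicator Y y"
      by (simp add: mult_ac)
  qed
  finally show ?thesis .
qed

lemma nn_integral_unit_affine_le:
  fixes G :: "real \<Rightarrow> ennreal"
  assumes [measurable]: "G \<in> borel_measurable borel" and c: "\<bar>c\<bar> = 1" and h: "h > 0"
  shows "(\<integral>\<^sup>+s. G (t + c * s) * indicator {h..2*h} s \<partial>lborel)
           \<le> (\<integral>\<^sup>+x. G x * indicator {t - 2*h..t + 2*h} x \<partial>lborel)"
proof -
  have "c = 1 \<or> c = -1"
    using c by (auto simp: abs_if split: if_splits)
  then have "(\<integral>\<^sup>+s. G (t + c * s) * indicator {h..2*h} s \<partial>lborel)
      \<le> (\<integral>\<^sup>+s. G (t + c * s) * indicator {t - 2*h..t + 2*h} (t + c * s) \<partial>lborel)"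
    using h by (intro nn_integral_mono mult_left_mono)
                 (auto simp: abs_le_iff abs_mult split: split_indicator)
  also have "\<dots> = (\<integral>\<^sup>+x. G x * indicator {t - 2*h..t + 2*h} x \<partial>lborel)"
    using nn_integral_real_affine[of "\<lambda>x. G x * indicator {t - 2*h..t + 2*h} x" c t] c by auto
  finally show ?thesis .
qed

lemma Cauchy_square_estimate_within:
  assumes holo: "\<phi> holomorphic_on UNIV" and s: "h \<le> s" "s \<le> 2*h" and h: "h > 0"
  shows "ennreal (2 * pi * norm (\<phi> z)) \<le> ennreal (1 / h) *
           (vline_norm_integral \<phi> (Re z + s) {Im z - 2*h..Im z + 2*h}
          + vline_norm_integral \<phi> (Re z - s) {Im z - 2*h..Im z + 2*h}
          + hline_norm_integral \<phi> (Im z - s) {Re z - 2*h..Re z + 2*h}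
          + hline_norm_integral \<phi> (Im z + s) {Re z - 2*h..Re z + 2*h})"
proof -
  have "ennreal (2 * pi * norm (\<phi> z)) \<le> ennreal (1 / s) *
           (vline_norm_integral \<phi> (Re z + s) {Im z - s..Im z + s}
          + vline_norm_integral \<phi> (Re z - s) {Im z - s..Im z + s}
          + hline_norm_integral \<phi> (Im z - s) {Re z - s..Re z + s}
          + hline_norm_integral \<phi> (Im z + s) {Re z - s..Re z + s})"
    using s h by (intro Cauchy_square_estimate holo) auto
  also have "\<dots> \<le> ennreal (1 / h) *
           (vline_norm_integral \<phi> (Re z + s) {Im z - 2*h..Im z + 2*h}
          + vline_norm_integral \<phi> (Re z - s) {Im z - 2*h..Im z + 2*h}
          + hline_norm_integral \<phi> (Im z - s) {Re z - 2*h..Re z + 2*h}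
          + hline_norm_integral \<phi> (Im z + s) {Re z - 2*h..Re z + 2*h})"
    using s h by (intro mult_mono add_mono ennreal_leI)
                 (auto simp: frac_le intro!: vline_norm_integral_mono hline_norm_integral_mono)
  finally show ?thesis .
qed

lemma Cauchy_square_area_estimate:
  assumes holo: "\<phi> holomorphic_on UNIV" and h: "h > 0"
  shows "ennreal (2 * pi * h * norm (\<phi> z))
           \<le> ennreal (4 / h) * box_norm_integral \<phi> {Re z - 2*h..Re z + 2*h} {Im z - 2*h..Im z + 2*h}"
proof -
  have [measurable]: "\<phi> \<in> borel_measurable borel"
    using holo by (intro borel_measurable_continuous_onI holomorphic_on_imp_continuous_on)
  define X where "X = {Re z - 2*h..Re z + 2*h}"
  define Y where "Y = {Im z - 2*h..Im z + 2*h}"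
  define Q where "Q = box_norm_integral \<phi> X Y"
  define V where "V x = vline_norm_integral \<phi> x Y" for x
  define H where "H y = hline_norm_integral \<phi> y X" for y
  have [measurable]: "V \<in> borel_measurable borel" "H \<in> borel_measurable borel"
    unfolding V_def H_def vline_norm_integral_def hline_norm_integral_def X_def Y_def by measurable
  have QV: "Q = (\<integral>\<^sup>+x. V x * indicator X x \<partial>lborel)"
    unfolding Q_def V_def X_def Y_def by (rule box_norm_integral_eq_vline) auto
  have QH: "Q = (\<integral>\<^sup>+y. H y * indicator Y y \<partial>lborel)"
    unfolding Q_def H_def X_def Y_def by (rule box_norm_integral_eq_hline) auto
  \<comment> \<open>The sides are written as \<open>Re z + c * s\<close> with \<open>\<bar>c\<bar> = 1\<close> to fit \<open>nn_integral_unit_affine_le\<close>.\<close>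
  have pointwise: "ennreal (2 * pi * norm (\<phi> z)) * indicator {h..2*h} s
      \<le> ennreal (1 / h) * (V (Re z + 1 * s) + V (Re z + (-1) * s) + H (Im z + (-1) * s) + H (Im z + 1 * s))
          * indicator {h..2*h} s" for s
    using Cauchy_square_estimate_within[OF holo _ _ h, of s z] unfolding V_def H_def X_def Y_def
    by (cases "s \<in> {h..2*h}") auto
  have "(\<integral>\<^sup>+s. ennreal (2 * pi * norm (\<phi> z)) * indicator {h..2*h} s \<partial>lborel)
      \<le> (\<integral>\<^sup>+s. ennreal (1 / h) * (V (Re z + 1 * s) + V (Re z + (-1) * s)
          + H (Im z + (-1) * s) + H (Im z + 1 * s)) * indicator {h..2*h} s \<partial>lborel)"
    by (intro nn_integral_mono pointwise)
  also have "\<dots> = ennreal (1 / h) * ((\<integral>\<^sup>+s. V (Re z + 1 * s) * indicator {h..2*h} s \<partial>lborel)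
      + (\<integral>\<^sup>+s. V (Re z + (-1) * s) * indicator {h..2*h} s \<partial>lborel)
      + (\<integral>\<^sup>+s. H (Im z + (-1) * s) * indicator {h..2*h} s \<partial>lborel)
      + (\<integral>\<^sup>+s. H (Im z + 1 * s) * indicator {h..2*h} s \<partial>lborel))"
    by (simp add: nn_integral_cmult nn_integral_add distrib_right mult.assoc)
  also have "\<dots> \<le> ennreal (1 / h) * ((\<integral>\<^sup>+x. V x * indicator X x \<partial>lborel) + (\<integral>\<^sup>+x. V x * indicator X x \<partial>lborel)
      + (\<integral>\<^sup>+y. H y * indicator Y y \<partial>lborel) + (\<integral>\<^sup>+y. H y * indicator Y y \<partial>lborel))"
    unfolding X_def Y_def by (intro mult_left_mono add_mono nn_integral_unit_affine_le h) auto
  also have "\<dots> = ennreal (1 / h) * ((1 + 1 + 1 + 1) * Q)"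
    unfolding QV[symmetric] QH[symmetric] by (simp only: distrib_right mult_1_left)
  also have "\<dots> = ennreal (4 / h) * Q"
    using h by (simp add: ennreal_mult divide_inverse mult_ac)
  also have "(\<integral>\<^sup>+s. ennreal (2 * pi * norm (\<phi> z)) * indicator {h..2*h} s \<partial>lborel)
      = ennreal (2 * pi * h * norm (\<phi> z))"
    using h by (subst nn_integral_cmult_indicator) (auto simp: ennreal_mult[symmetric] mult_ac)
  finally show ?thesis
    unfolding Q_def X_def Y_def .
qed

lemma norm_le_exp_mult_gaussian_density:
  fixes v w :: complex
  assumes "norm w \<le> R"
  shows "norm v \<le> exp (R^2 / 2) * ((norm v)^2 * exp (- ((norm w)^2)) + 1)"
proof -
  define t where "t = norm v * exp (- ((norm w)^2) / 2)"
  have t: "t \<le> t^2 + 1"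
  proof -
    have "2 * t \<le> t^2 + 1"
      using zero_le_power2[of "t - 1"] by (simp add: power2_diff)
    then show ?thesis
      using zero_le_power2[of t] by linarith
  qed
  have "norm v = t * exp ((norm w)^2 / 2)"
    unfolding t_def by (simp add: mult.assoc exp_add[symmetric])
  also have "\<dots> \<le> (t^2 + 1) * exp (R^2 / 2)"
    using t assms by (intro mult_mono) (auto simp: t_def power_mono)
  also have "t^2 = (norm v)^2 * exp (- ((norm w)^2))"
    unfolding t_def by (simp add: power_mult_distrib exp_double[symmetric] power2_eq_square exp_add[symmetric])
  finally show ?thesis
    by (simp add: mult.commute)
qed

lemma nn_integral_indicator_rectangle:
  fixes a b c d :: real
  assumes "a \<le> b" "c \<le> d"
  shows "(\<integral>\<^sup>+x. \<integral>\<^sup>+y. indicator {a..b} x * indicator {c..d} y \<partial>lborel \<partial>lborel) = ennreal ((b - a) * (d - c))"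
proof -
  have "(\<integral>\<^sup>+x. \<integral>\<^sup>+y. indicator {a..b} x * indicator {c..d} y \<partial>lborel \<partial>lborel)
      = (\<integral>\<^sup>+x. ennreal (d - c) * indicator {a..b} x \<partial>lborel)"
    using assms by (intro nn_integral_cong) (simp add: nn_integral_cmult mult.commute)
  also have "\<dots> = ennreal (d - c) * ennreal (b - a)"
    using assms by (simp add: nn_integral_cmult_indicator)
  finally show ?thesis
    using assms by (simp add: ennreal_mult[symmetric] mult.commute)
qed

lemma box_norm_integral_le_gaussian_density:
  assumes [measurable]: "\<phi> \<in> borel_measurable borel" "X \<in> sets borel" "Y \<in> sets borel"
    and R: "\<And>x y. x \<in> X \<Longrightarrow> y \<in> Y \<Longrightarrow> norm (Complex x y) \<le> R"
  shows "box_norm_integral \<phi> X Y \<le> ennreal (exp (R^2 / 2)) *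
           ((\<integral>\<^sup>+x. \<integral>\<^sup>+y. ennreal ((norm (\<phi> (Complex x y)))^2 * exp (- ((norm (Complex x y))^2)))
               \<partial>lborel \<partial>lborel)
          + (\<integral>\<^sup>+x. \<integral>\<^sup>+y. indicator X x * indicator Y y \<partial>lborel \<partial>lborel))"
proof -
  define K where "K = exp (R^2 / 2)"
  define f where "f w = (norm (\<phi> w))^2 * exp (- ((norm w)^2))" for w
  have "ennreal (norm (\<phi> (Complex x y))) * indicator X x * indicator Y y
      \<le> ennreal K * ennreal (f (Complex x y)) + ennreal K * (indicator X x * indicator Y y)" for x y
  proof (cases "x \<in> X \<and> y \<in> Y")
    case True
    then have "ennreal (norm (\<phi> (Complex x y))) \<le> ennreal (K * f (Complex x y) + K)"
      using norm_le_exp_mult_gaussian_density[OF R, of x y "\<phi> (Complex x y)"]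
      by (intro ennreal_leI) (simp add: K_def f_def algebra_simps)
    also have "\<dots> = ennreal K * ennreal (f (Complex x y)) + ennreal K"
      by (simp add: K_def f_def ennreal_mult[symmetric] ennreal_plus[symmetric] del: ennreal_plus)
    finally show ?thesis
      using True by simp
  qed auto
  then have "box_norm_integral \<phi> X Y \<le> (\<integral>\<^sup>+x. \<integral>\<^sup>+y. ennreal K * ennreal (f (Complex x y))
      + ennreal K * (indicator X x * indicator Y y) \<partial>lborel \<partial>lborel)"
    unfolding box_norm_integral_def by (intro nn_integral_mono)
  also have "\<dots> = ennreal K * ((\<integral>\<^sup>+x. \<integral>\<^sup>+y. ennreal (f (Complex x y)) \<partial>lborel \<partial>lborel)
      + (\<integral>\<^sup>+x. \<integral>\<^sup>+y. indicator X x * indicator Y y \<partial>lborel \<partial>lborel))"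
    by (simp add: nn_integral_add nn_integral_cmult distrib_left f_def)
  finally show ?thesis
    unfolding K_def f_def .
qed

lemma bargmann_growth:
  assumes B: "bargmann \<phi>" and a: "a > 0"
  obtains C where "\<And>z. norm (\<phi> z) \<le> C * exp ((norm z + a)^2 / 2)"
proof -
  have holo: "\<phi> holomorphic_on UNIV"
    using B by (simp add: bargmann_def)
  have [measurable]: "\<phi> \<in> borel_measurable borel"
    using holo by (intro borel_measurable_continuous_onI holomorphic_on_imp_continuous_on)
  define N where "N = (\<integral>z. (norm (\<phi> z))^2 * exp (- ((norm z)^2)) \<partial>lborel)"
  have N0: "N \<ge> 0"
    unfolding N_def by (intro integral_nonneg_AE) auto
  have N: "(\<integral>\<^sup>+x. \<integral>\<^sup>+y. ennreal ((norm (\<phi> (Complex x y)))^2 * exp (- ((norm (Complex x y))^2)))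
             \<partial>lborel \<partial>lborel) = ennreal N"
  proof -
    have "(\<integral>\<^sup>+x. \<integral>\<^sup>+y. ennreal ((norm (\<phi> (Complex x y)))^2 * exp (- ((norm (Complex x y))^2)))
             \<partial>lborel \<partial>lborel) = (\<integral>\<^sup>+z. ennreal ((norm (\<phi> z))^2 * exp (- ((norm z)^2))) \<partial>lborel)"
      by (rule nn_integral_lborel_complex[symmetric]) simp
    also have "\<dots> = ennreal N"
      unfolding N_def using B by (intro nn_integral_eq_integral) (auto simp: bargmann_def)
    finally show ?thesis .
  qed
  define h where "h = a / 4"
  have h: "h > 0"
    using a by (simp add: h_def)
  show ?thesis
  proof
    fix z :: complex
    define K where "K = exp ((norm z + a)^2 / 2)"
    have "norm (Complex x y) \<le> norm z + a"
      if "x \<in> {Re z - 2*h..Re z + 2*h}" "y \<in> {Im z - 2*h..Im z + 2*h}" for x y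
    proof -
      have "norm (Complex x y - z) \<le> \<bar>Re (Complex x y - z)\<bar> + \<bar>Im (Complex x y - z)\<bar>"
        by (rule cmod_le)
      also have "\<dots> \<le> a"
        using that unfolding h_def by (auto simp: abs_le_iff)
      finally show ?thesis
        using norm_triangle_ineq2[of "Complex x y" z] by linarith
    qed
    then have "box_norm_integral \<phi> {Re z - 2*h..Re z + 2*h} {Im z - 2*h..Im z + 2*h}
        \<le> ennreal K * (ennreal N + ennreal (a^2))"
      using box_norm_integral_le_gaussian_density[of \<phi> "{Re z - 2*h..Re z + 2*h}" "{Im z - 2*h..Im z + 2*h}"]
            nn_integral_indicator_rectangle[of "Re z - 2*h" "Re z + 2*h" "Im z - 2*h" "Im z + 2*h"] h
      unfolding N K_def by (simp add: h_def power2_eq_square)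
    with Cauchy_square_area_estimate[OF holo h, of z]
    have "ennreal (2 * pi * h * norm (\<phi> z)) \<le> ennreal (4 / h) * (ennreal K * (ennreal N + ennreal (a^2)))"
      by (auto elim!: order_trans intro!: mult_left_mono)
    also have "\<dots> = ennreal (4 / h * (K * (N + a^2)))"
      using h N0 by (simp add: K_def ennreal_mult[symmetric] ennreal_plus[symmetric] del: ennreal_plus)
    finally have "2 * pi * h * norm (\<phi> z) \<le> 4 / h * (K * (N + a^2))"
      using h N0 by (subst (asm) ennreal_le_iff) (auto simp: K_def)
    then show "norm (\<phi> z) \<le> 2 * (N + a^2) / (pi * h^2) * exp ((norm z + a)^2 / 2)"
      using h unfolding K_def by (simp add: field_simps power2_eq_square)
  qed
qed

lemma norm_deriv_le_of_growth:
  assumes holo: "\<phi> holomorphic_on UNIV" and h: "h > 0" and a: "a \<ge> 0"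
    and bound: "\<And>z. norm (\<phi> z) \<le> C * exp ((norm z + a)^2 / 2)"
  shows "norm (deriv \<phi> z) \<le> C / h * exp ((norm z + a + h)^2 / 2)"
proof -
  have C0: "C \<ge> 0"
    using bound[of 0] by (smt (verit) exp_gt_zero norm_ge_zero zero_le_mult_iff)
  have "norm ((deriv ^^ 1) \<phi> z) \<le> fact 1 * (C * exp ((norm z + a + h)^2 / 2)) / h^1"
  proof (rule Cauchy_inequality)
    show "\<phi> holomorphic_on ball z h"
      using holo by (rule holomorphic_on_subset) auto
    show "continuous_on (cball z h) \<phi>"
      using holo holomorphic_on_imp_continuous_on continuous_on_subset by blast
    fix x
    assume "norm (z - x) = h"
    then have "norm x \<le> norm z + h"
      using norm_triangle_ineq2[of x z] norm_minus_commute[of z x] by linarith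
    then have "exp ((norm x + a)^2 / 2) \<le> exp ((norm z + a + h)^2 / 2)"
      using a by (simp add: power_mono)
    then show "norm (\<phi> x) \<le> C * exp ((norm z + a + h)^2 / 2)"
      using bound[of x] C0 by (meson mult_left_mono order_trans)
  qed (use h in auto)
  then show ?thesis
    by simp
qed

lemma bargmann_deriv_growth:
  assumes B: "bargmann \<phi>" and a: "a > 0"
  obtains C where "\<And>z. norm (deriv \<phi> z) \<le> C * exp ((norm z + a)^2 / 2)"
proof -
  obtain C where C: "\<And>z. norm (\<phi> z) \<le> C * exp ((norm z + a / 2)^2 / 2)"
    using bargmann_growth[OF B, of "a / 2"] a by auto
  have "norm (deriv \<phi> z) \<le> C / (a / 2) * exp ((norm z + a)^2 / 2)" for z
  proof -
    have "norm (deriv \<phi> z) \<le> C / (a / 2) * exp ((norm z + a / 2 + a / 2)^2 / 2)"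
      using B a by (intro norm_deriv_le_of_growth C) (auto simp: bargmann_def)
    then show ?thesis
      by (simp only: add.assoc field_sum_of_halves)
  qed
  then show ?thesis
    by (rule that)
qed

lemma exp_growth_mult_gaussian_le:
  fixes u a \<rho> :: real
  assumes "u \<le> 0" "0 \<le> a" "a \<le> \<rho> / 2"
  shows "exp ((\<bar>u\<bar> + a)^2 / 2) * exp (- ((u - \<rho>)^2) / 2) \<le> exp (\<rho> * u / 2)"
proof -
  have "(\<bar>u\<bar> + a)^2 / 2 - (u - \<rho>)^2 / 2 = u * (\<rho> - a) + (a^2 - \<rho>^2) / 2"
    using assms by (simp add: abs_of_nonpos power2_eq_square field_simps)
  also have "\<dots> \<le> \<rho> * u / 2"
  proof -
    have "u * (\<rho> - a) \<le> u * (\<rho> / 2)"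
      using assms by (intro mult_left_mono_neg) auto
    then have "u * (\<rho> - a) \<le> \<rho> * u / 2"
      by (simp add: mult.commute)
    moreover have "(a^2 - \<rho>^2) / 2 \<le> 0"
      using assms power_mono[of a \<rho> 2] by simp
    ultimately show ?thesis
      by linarith
  qed
  finally show ?thesis
    by (simp add: exp_add[symmetric])
qed

lemma set_integrable_exp_atMost:
  fixes c :: real
  assumes c: "c > 0"
  shows "set_integrable lborel {..0} (\<lambda>u. exp (c * u))"
proof -
  have "(\<integral>\<^sup>+u. ennreal (indicator {..0} u * exp (c * u)) \<partial>lborel)
      = (\<integral>\<^sup>+x. ennreal (exp (- c * x)) * indicator {0..} x \<partial>lborel)"
    by (subst nn_integral_real_affine[where c = "-1" and t = 0])
       (auto intro!: nn_integral_cong simp: indicator_def)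
  also have "\<dots> = ennreal (0 - (- exp (- c * 0) / c))"
  proof (rule nn_integral_FTC_atLeast)
    fix x :: real
    show "((\<lambda>x. - exp (- c * x) / c) has_real_derivative exp (- c * x)) (at x)"
      using c by (auto intro!: derivative_eq_intros)
    show "((\<lambda>x. - exp (- c * x) / c) \<longlongrightarrow> 0) at_top"
      using c by real_asymp
  qed auto
  finally have "(\<integral>\<^sup>+u. ennreal (indicator {..0} u * exp (c * u)) \<partial>lborel) < \<infinity>"
    by simp
  then show ?thesis
    unfolding set_integrable_def by (intro integrableI_nonneg) auto
qed

lemma set_integral_atMost_FTC:
  fixes G g :: "real \<Rightarrow> 'a::euclidean_space"
  assumes g: "set_integrable lborel {..y} g"
    and G: "continuous_on {..y} G" "(G \<longlongrightarrow> 0) at_bot"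
    and deriv: "\<And>x. x < y \<Longrightarrow> (G has_vector_derivative g x) (at x)"
  shows "G y = (LINT u:{..y}|lborel. g u)"
proof -
  have "G y - G a = (LINT u:{a..y}|lborel. g u)" if "a \<le> y" for a
  proof -
    have "(g has_integral (G y - G a)) {a..y}"
      using that by (intro fundamental_theorem_of_calculus_interior continuous_on_subset[OF G(1)] deriv) auto
    moreover have "set_integrable lborel {a..y} g"
      by (rule set_integrable_subset[OF g]) auto
    ultimately show ?thesis
      by (simp add: set_borel_integral_eq_integral integral_unique)
  qed
  then have "eventually (\<lambda>a. G y - G a = (LINT u:{a..y}|lborel. g u)) at_bot"
    unfolding eventually_at_bot_linorder by blast
  moreover have "((\<lambda>a. G y - G a) \<longlongrightarrow> G y - 0) at_bot"
    by (intro tendsto_intros G(2))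
  ultimately have "((\<lambda>a. LINT u:{a..y}|lborel. g u) \<longlongrightarrow> G y) at_bot"
    by (simp add: Lim_transform_eventually)
  moreover have "((\<lambda>a. LINT u:{a..y}|lborel. g u) \<longlongrightarrow> (LINT u:{..y}|lborel. g u)) at_bot"
    by (intro tendsto_set_lebesgue_integral_at_bot g) auto
  ultimately show ?thesis
    by (rule tendsto_unique[rotated]) simp
qed

lemma has_vector_derivative_imag_axis:
  assumes "\<psi> holomorphic_on UNIV"
  shows "((\<lambda>t::real. \<psi> (\<i> * of_real t)) has_vector_derivative (\<i> * deriv \<psi> (\<i> * of_real t))) (at t)"
proof -
  have "(\<psi> has_field_derivative deriv \<psi> w) (at w)" for w
    using holomorphic_derivI[OF assms open_UNIV] by blast
  from DERIV_chain2[OF this DERIV_cmult_Id[of \<i> "of_real t"]]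
  have "((\<lambda>w. \<psi> (\<i> * w)) has_field_derivative (\<i> * deriv \<psi> (\<i> * of_real t))) (at (of_real t))"
    by (simp add: mult.commute)
  then show ?thesis
    by (rule has_vector_derivative_real_field)
qed

lemma norm_le_mult_norm_of_deriv_le:
  assumes holo: "\<phi> holomorphic_on UNIV" and \<phi>0: "\<phi> 0 = 0" and w: "norm w \<le> r"
    and L: "\<And>z. norm z \<le> r \<Longrightarrow> norm (deriv \<phi> z) \<le> L"
  shows "norm (\<phi> w) \<le> L * norm w"
proof -
  have "norm (\<phi> w - \<phi> 0) \<le> L * norm (w - 0)"
  proof (rule field_differentiable_bound[of "cball 0 r"])
    fix z :: complex
    assume "z \<in> cball 0 r"
    then show "(\<phi> has_field_derivative deriv \<phi> z) (at z within cball 0 r)" "norm (deriv \<phi> z) \<le> L"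
      using holomorphic_derivI[OF holo open_UNIV] L by auto
  qed (use w order_trans[OF norm_ge_zero w] in auto)
  then show ?thesis
    using \<phi>0 by simp
qed

lemma norm_gaussian_quotient_le:
  fixes \<rho> u :: real
  assumes \<rho>: "\<rho> > 0" and u: "u \<le> 0" and C0: "C \<ge> 0" and L0: "L \<ge> 0"
    and C: "\<And>z. norm (\<phi> z) \<le> C * exp ((norm z + \<rho> / 2)^2 / 2)"
    and L: "\<And>w. norm w \<le> 1 \<Longrightarrow> norm (\<phi> w) \<le> L * norm w"
  shows "norm (complex_of_real (exp (- ((u - \<rho>)^2) / 2)) * \<phi> (\<i> * of_real u) / of_real u)
           \<le> (C + L * exp (\<rho> / 2)) * exp (\<rho> / 2 * u)"
    (is "?k \<le> ?K * _")
proof -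
  define E where "E = exp (- ((u - \<rho>)^2) / 2)"
  have norm_k: "?k = E * (norm (\<phi> (\<i> * of_real u)) / \<bar>u\<bar>)"
    unfolding E_def by (simp add: norm_mult norm_divide)
  show ?thesis
  proof (cases "u \<le> -1")
    case True
    have "norm (\<phi> (\<i> * of_real u)) / \<bar>u\<bar> \<le> norm (\<phi> (\<i> * of_real u))"
      using True divide_left_mono[of 1 "\<bar>u\<bar>" "norm (\<phi> (\<i> * of_real u))"] by simp
    then have "?k \<le> E * norm (\<phi> (\<i> * of_real u))"
      unfolding norm_k by (rule mult_left_mono) (simp_all add: E_def)
    also have "\<dots> \<le> C * (exp ((\<bar>u\<bar> + \<rho> / 2)^2 / 2) * E)"
      using C[of "\<i> * of_real u"] by (simp add: norm_mult E_def)
    also have "\<dots> \<le> C * exp (\<rho> * u / 2)"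
      unfolding E_def using C0 u \<rho> by (intro mult_left_mono exp_growth_mult_gaussian_le) auto
    also have "\<dots> \<le> ?K * exp (\<rho> / 2 * u)"
      using L0 by (simp add: algebra_simps)
    finally show ?thesis .
  next
    case False
    \<comment> \<open>At \<open>u = 0\<close> the quotient is \<open>0\<close> because \<open>x / 0 = 0\<close>.\<close>
    have "norm (\<phi> (\<i> * of_real u)) / \<bar>u\<bar> \<le> L"
    proof (cases "u = 0")
      case False
      have "norm (\<phi> (\<i> * of_real u)) \<le> L * \<bar>u\<bar>"
        using L[of "\<i> * of_real u"] \<open>\<not> u \<le> -1\<close> u by (simp add: norm_mult)
      then show ?thesis
        using False by (subst pos_divide_le_eq) auto
    qed (use L0 in simp)
    then have "?k \<le> 1 * L"
      unfolding norm_k using L0 by (intro mult_mono) (auto simp: E_def)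
    also have "\<dots> = L * 1"
      by simp
    also have "\<dots> \<le> L * exp (\<rho> / 2 * (1 + u))"
      using False L0 \<rho> by (intro mult_left_mono) auto
    also have "\<dots> = L * exp (\<rho> / 2) * exp (\<rho> / 2 * u)"
      by (simp add: distrib_left exp_add)
    also have "\<dots> \<le> ?K * exp (\<rho> / 2 * u)"
      using C0 by (simp add: distrib_right)
    finally show ?thesis .
  qed
qed

lemma set_integrable_gaussian_quotient:
  fixes \<rho> :: real
  assumes holo: "\<phi> holomorphic_on UNIV" and \<phi>0: "\<phi> 0 = 0" and \<rho>: "\<rho> > 0"
    and C: "\<And>z. norm (\<phi> z) \<le> C * exp ((norm z + \<rho> / 2)^2 / 2)"
    and D: "\<And>z. norm (deriv \<phi> z) \<le> D * exp ((norm z + \<rho> / 2)^2 / 2)"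
  shows "set_integrable lborel {..0}
           (\<lambda>u. complex_of_real (exp (- ((u - \<rho>)^2) / 2)) * \<phi> (\<i> * of_real u) / of_real u)"
proof (rule set_integrable_bound)
  have [measurable]: "\<phi> \<in> borel_measurable borel"
    using holo by (intro borel_measurable_continuous_onI holomorphic_on_imp_continuous_on)
  have C0: "C \<ge> 0" and D0: "D \<ge> 0"
    using C[of 0] D[of 0] by (smt (verit) exp_gt_zero norm_ge_zero zero_le_mult_iff)+
  define L where "L = D * exp ((1 + \<rho> / 2)^2 / 2)"
  have L0: "L \<ge> 0"
    using D0 by (simp add: L_def)
  have "norm (\<phi> w) \<le> L * norm w" if "norm w \<le> 1" for w
  proof (rule norm_le_mult_norm_of_deriv_le[OF holo \<phi>0 that])
    fix z :: complex
    assume "norm z \<le> 1"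
    then have "exp ((norm z + \<rho> / 2)^2 / 2) \<le> exp ((1 + \<rho> / 2)^2 / 2)"
      using \<rho> by (simp add: power_mono)
    then show "norm (deriv \<phi> z) \<le> L"
      unfolding L_def using D[of z] D0 by (meson mult_left_mono order_trans)
  qed
  from norm_gaussian_quotient_le[OF \<rho> _ C0 L0 C this]
  show "AE u in lborel. u \<in> {..0} \<longrightarrow>
          norm (complex_of_real (exp (- ((u - \<rho>)^2) / 2)) * \<phi> (\<i> * of_real u) / of_real u)
          \<le> norm ((C + L * exp (\<rho> / 2)) * exp (\<rho> / 2 * u))"
    using C0 L0 by (auto intro!: AE_I2)
  show "set_integrable lborel {..0} (\<lambda>u. (C + L * exp (\<rho> / 2)) * exp (\<rho> / 2 * u))"
    using set_integrable_exp_atMost[of "\<rho> / 2"] \<rho> by (intro set_integrable_mult_right) auto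
  show "set_borel_measurable lborel {..0}
          (\<lambda>u. complex_of_real (exp (- ((u - \<rho>)^2) / 2)) * \<phi> (\<i> * of_real u) / of_real u)"
    unfolding set_borel_measurable_def by measurable
qed

lemma eigen_equation_imag_axis:
  fixes mu lam :: real
  assumes lam: "lam \<noteq> 0" and t: "t \<noteq> 0"
    and eq: "H_op mu lam \<phi> (\<i> * of_real t) = \<sigma>t * \<phi> (\<i> * of_real t)"
  shows "\<i> * (\<i> * deriv (deriv \<phi>) (\<i> * of_real t))
           - of_real (t - mu / lam) * (\<i> * deriv \<phi> (\<i> * of_real t))
         = \<sigma>t / of_real lam * \<phi> (\<i> * of_real t) / of_real t"
proof -
  define A where "A = deriv \<phi> (\<i> * of_real t)"
  define B where "B = deriv (deriv \<phi>) (\<i> * of_real t)"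
  have "of_real t * of_real lam * (- B - of_real (t - mu / lam) * (\<i> * A)) = \<sigma>t * \<phi> (\<i> * of_real t)"
    using eq lam unfolding H_op_def A_def[symmetric] B_def[symmetric]
    by (simp add: power2_eq_square field_simps)
  then show ?thesis
    using lam t unfolding A_def B_def by (simp add: field_simps)
qed

lemma gaussian_weighted_deriv_has_vector_derivative:
  fixes mu lam :: real
  assumes holo: "\<phi> holomorphic_on UNIV" and lam: "lam \<noteq> 0" and t: "t \<noteq> 0"
    and eq: "H_op mu lam \<phi> (\<i> * of_real t) = \<sigma>t * \<phi> (\<i> * of_real t)"
  shows "((\<lambda>s. exp (- ((s - mu / lam)^2) / 2) *\<^sub>R (\<i> * deriv \<phi> (\<i> * of_real s))) has_vector_derivative
           \<sigma>t / of_real lam * (complex_of_real (exp (- ((t - mu / lam)^2) / 2)) * \<phi> (\<i> * of_real t) / of_real t))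
         (at t)"
proof -
  define E where "E = exp (- ((t - mu / lam)^2) / 2)"
  have "((\<lambda>s. exp (- ((s - mu / lam)^2) / 2)) has_real_derivative E * (- (t - mu / lam))) (at t)"
    unfolding E_def by (rule derivative_eq_intros refl | simp)+
  moreover have "((\<lambda>s. \<i> * deriv \<phi> (\<i> * of_real s)) has_vector_derivative
                    \<i> * (\<i> * deriv (deriv \<phi>) (\<i> * of_real t))) (at t)"
    using has_vector_derivative_imag_axis[OF holomorphic_deriv[OF holo open_UNIV]]
    by (rule has_vector_derivative_mult_right)
  ultimately have "((\<lambda>s. exp (- ((s - mu / lam)^2) / 2) *\<^sub>R (\<i> * deriv \<phi> (\<i> * of_real s))) has_vector_derivative
      of_real E * (\<i> * (\<i> * deriv (deriv \<phi>) (\<i> * of_real t))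
                   - of_real (t - mu / lam) * (\<i> * deriv \<phi> (\<i> * of_real t)))) (at t)"
    unfolding E_def[symmetric]
    by (rule has_vector_derivative_eq_rhs[OF has_vector_derivative_scaleR])
       (simp add: scaleR_conv_of_real algebra_simps E_def)
  then show ?thesis
    unfolding eigen_equation_imag_axis[OF lam t eq] E_def by (simp add: mult_ac)
qed

lemma gaussian_weighted_deriv_tendsto_zero:
  fixes \<rho> :: real
  assumes \<rho>: "\<rho> > 0" and D: "\<And>z. norm (deriv \<phi> z) \<le> D * exp ((norm z + \<rho> / 2)^2 / 2)"
  shows "((\<lambda>s. exp (- ((s - \<rho>)^2) / 2) *\<^sub>R (\<i> * deriv \<phi> (\<i> * of_real s))) \<longlongrightarrow> 0) at_bot"
proof (rule Lim_null_comparison)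
  have D0: "D \<ge> 0"
    using D[of 0] by (smt (verit) exp_gt_zero norm_ge_zero zero_le_mult_iff)
  have "norm (exp (- ((s - \<rho>)^2) / 2) *\<^sub>R (\<i> * deriv \<phi> (\<i> * of_real s))) \<le> D * exp (\<rho> * s / 2)"
    if "s \<le> 0" for s
  proof -
    have "norm (exp (- ((s - \<rho>)^2) / 2) *\<^sub>R (\<i> * deriv \<phi> (\<i> * of_real s)))
        \<le> D * (exp ((\<bar>s\<bar> + \<rho> / 2)^2 / 2) * exp (- ((s - \<rho>)^2) / 2))"
      using D[of "\<i> * of_real s"] by (simp add: norm_mult mult_ac)
    also have "\<dots> \<le> D * exp (\<rho> * s / 2)"
      using that \<rho> D0 by (intro mult_left_mono exp_growth_mult_gaussian_le) auto
    finally show ?thesis .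
  qed
  then show "eventually (\<lambda>s. norm (exp (- ((s - \<rho>)^2) / 2) *\<^sub>R (\<i> * deriv \<phi> (\<i> * of_real s)))
                             \<le> D * exp (\<rho> * s / 2)) at_bot"
    unfolding eventually_at_bot_linorder by blast
  show "((\<lambda>s. D * exp (\<rho> * s / 2)) \<longlongrightarrow> 0) at_bot"
    using \<rho> by real_asymp
qed

lemma imag_axis_derivative_eq_weighted_integral:
  fixes mu lam :: real
  assumes lam: "lam \<noteq> 0" and \<rho>: "mu / lam > 0" and holo: "\<phi> holomorphic_on UNIV"
    and eigen: "\<And>z. H_op mu lam \<phi> z = \<sigma>t * \<phi> z"
    and D: "\<And>z. norm (deriv \<phi> z) \<le> D * exp ((norm z + mu / lam / 2)^2 / 2)"
    and int: "set_integrable lborel {..0}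
              (\<lambda>u. complex_of_real (exp (- ((u - mu / lam)^2) / 2)) * \<phi> (\<i> * of_real u) / of_real u)"
    and y: "y \<le> 0"
  shows "((\<lambda>t. \<phi> (\<i> * of_real t)) has_vector_derivative
           \<sigma>t / of_real lam * complex_of_real (exp ((y - mu / lam)^2 / 2)) *
           (LINT u:{..y}|lborel. complex_of_real (exp (- ((u - mu / lam)^2) / 2)) * \<phi> (\<i> * of_real u) / of_real u))
         (at y)"
proof -
  define k where "k u = complex_of_real (exp (- ((u - mu / lam)^2) / 2)) * \<phi> (\<i> * of_real u) / of_real u" for u
  define G where "G s = exp (- ((s - mu / lam)^2) / 2) *\<^sub>R (\<i> * deriv \<phi> (\<i> * of_real s))" for s
  have Gy: "G y = (LINT u:{..y}|lborel. \<sigma>t / of_real lam * k u)"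
  proof (rule set_integral_atMost_FTC)
    show "set_integrable lborel {..y} (\<lambda>u. \<sigma>t / of_real lam * k u)"
      using y unfolding k_def by (intro set_integrable_mult_right set_integrable_subset[OF int]) auto
    show "continuous_on {..y} G"
      unfolding G_def using has_vector_derivative_imag_axis[OF holomorphic_deriv[OF holo open_UNIV]]
      by (intro continuous_intros continuous_at_imp_continuous_on ballI has_vector_derivative_continuous)
         (auto intro: has_vector_derivative_mult_right)
    show "(G \<longlongrightarrow> 0) at_bot"
      unfolding G_def by (rule gaussian_weighted_deriv_tendsto_zero[OF \<rho> D])
    show "(G has_vector_derivative \<sigma>t / of_real lam * k x) (at x)" if "x < y" for x
      unfolding G_def k_def using that y
      by (intro gaussian_weighted_deriv_has_vector_derivative holo lam eigen) auto
  qed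
  have "\<i> * deriv \<phi> (\<i> * of_real y) = exp ((y - mu / lam)^2 / 2) *\<^sub>R G y"
    unfolding G_def by (simp add: exp_add[symmetric] exp_minus_inverse)
  also have "\<dots> = \<sigma>t / of_real lam * complex_of_real (exp ((y - mu / lam)^2 / 2)) * (LINT u:{..y}|lborel. k u)"
    unfolding Gy by (simp add: scaleR_conv_of_real mult_ac)
  finally show ?thesis
    using has_vector_derivative_imag_axis[OF holo, of y] unfolding k_def by simp
qed

theorem proposition5p5:
  fixes mu lam :: real and \<sigma>t :: complex and \<phi> :: "complex \<Rightarrow> complex"
  assumes "lam \<noteq> 0"
    and "mu / lam > 0"
    and "\<sigma>t \<noteq> 0"
    and "bargmann \<phi>"
    and "\<And>z. H_op mu lam \<phi> z = \<sigma>t * \<phi> z"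
  shows "set_integrable lborel {..<(0::real)}
           (\<lambda>u. complex_of_real (exp (- ((u - mu / lam)^2) / 2)) * \<phi> (\<i> * of_real u) / of_real u)
       \<and> (\<forall>y::real. y \<le> 0 \<longrightarrow>
           ((\<lambda>t::real. \<phi> (\<i> * of_real t)) has_vector_derivative
              (\<sigma>t / of_real lam) * complex_of_real (exp ((y - mu / lam)^2 / 2)) *
              (LINT u:{..y}|lborel.
                 complex_of_real (exp (- ((u - mu / lam)^2) / 2)) * \<phi> (\<i> * of_real u) / of_real u))
           (at y))"
proof -
  have holo: "\<phi> holomorphic_on UNIV"
    using assms(4) by (simp add: bargmann_def)
  have \<phi>0: "\<phi> 0 = 0"
    using assms(5)[of 0] assms(3) by (simp add: H_op_def)
  obtain C where C: "\<And>z. norm (\<phi> z) \<le> C * exp ((norm z + mu / lam / 2)^2 / 2)"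
    using bargmann_growth[OF assms(4), of "mu / lam / 2"] assms(2) by auto
  obtain D where D: "\<And>z. norm (deriv \<phi> z) \<le> D * exp ((norm z + mu / lam / 2)^2 / 2)"
    using bargmann_deriv_growth[OF assms(4), of "mu / lam / 2"] assms(2) by auto
  have k: "set_integrable lborel {..0}
             (\<lambda>u. complex_of_real (exp (- ((u - mu / lam)^2) / 2)) * \<phi> (\<i> * of_real u) / of_real u)"
    by (rule set_integrable_gaussian_quotient[OF holo \<phi>0 assms(2) C D])
  show ?thesis
    using imag_axis_derivative_eq_weighted_integral[OF assms(1,2) holo assms(5) D k]
    by (intro conjI allI impI set_integrable_subset[OF k]) auto
qed

end
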